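(* Let $G=(V,E)$ be a graph with a partition $(V_1,V_2)$ of $V$ such that $G[V_1]$ and $G[V_2]$ are $P_5$-free, and let $k$ be an integer. Suppose that: $k\ge 1$; $G$ contains a $P_5$; every vertex of $G$ lies on some $P_5$ in $G$; every $P_5$ in $G$ contains at least $4$ vertices of $V_2$; and there is no vertex $v\in V_2$ that is isolated in $G[V_2]$ and for which there is a path $(v,w,x,y,z)$ in $G$ with $w\in V_1$. Let $e=\{u,v\}$ be an edge of $G[V_2]$ such that at least two vertices of $V_1$ are adjacent to $u$ or $v$, and each of $u$ and $v$ has at least one neighbour in $V_1$. Let $C_e$ be the connected component of $G[V_2]$ containing $e$. Then every vertex $w\in V_1$ adjacent to $u$ or $v$ satisfies $N(w)\subseteq V(C_e)$.
   Context: Graphs are finite, simple and undirected. A $P_5$ is a path on $5$ vertices (as a not necessarily induced subgraph), written as the sequence of its vertices; a graph is $P_5$-free if it contains no $P_5$. $G[X]$ denotes the subgraph induced by $X$; $N(w)$ is the set of neighbours of $w$ in $G$. *)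

theory Defs
  imports Main
begin

definition graph :: "'a set \<Rightarrow> ('a \<Rightarrow> 'a \<Rightarrow> bool) \<Rightarrow> bool" where
  "graph V E \<longleftrightarrow> finite V \<and> (\<forall>x y. E x y \<longrightarrow> x \<in> V \<and> y \<in> V)
     \<and> (\<forall>x y. E x y \<longrightarrow> E y x) \<and> (\<forall>x. \<not> E x x)"

definition induced :: "('a \<Rightarrow> 'a \<Rightarrow> bool) \<Rightarrow> 'a set \<Rightarrow> 'a \<Rightarrow> 'a \<Rightarrow> bool" where
  "induced E X = (\<lambda>x y. E x y \<and> x \<in> X \<and> y \<in> X)"

text \<open>A P5 (not necessarily induced) in the graph (V,E), as the sequence of its vertices.\<close>
definition is_P5 :: "'a set \<Rightarrow> ('a \<Rightarrow> 'a \<Rightarrow> bool) \<Rightarrow> 'a list \<Rightarrow> bool" where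
  "is_P5 V E p \<longleftrightarrow> length p = 5 \<and> distinct p \<and> set p \<subseteq> V
     \<and> (\<forall>i<4. E (p ! i) (p ! Suc i))"

definition P5_free :: "'a set \<Rightarrow> ('a \<Rightarrow> 'a \<Rightarrow> bool) \<Rightarrow> bool" where
  "P5_free V E \<longleftrightarrow> \<not> (\<exists>p. is_P5 V E p)"

definition component :: "'a set \<Rightarrow> ('a \<Rightarrow> 'a \<Rightarrow> bool) \<Rightarrow> 'a \<Rightarrow> 'a set" where
  "component V E u = {y \<in> V. E\<^sup>*\<^sup>* u y}"

definition nbhd :: "'a set \<Rightarrow> ('a \<Rightarrow> 'a \<Rightarrow> bool) \<Rightarrow> 'a \<Rightarrow> 'a set" where
  "nbhd V E w = {x \<in> V. E w x}"

end

theory Submission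
  imports Defs
begin

(* Since every P5 has at least four vertices in V2, no P5 contains two vertices outside V2.
   Let w \<in> V1 be adjacent to an end of e. The attachment hypotheses on e provide a second vertex
   w' \<in> V1 such that w and w' are adjacent to different ends a, b of e. A neighbour x of w
   other than u, v then yields the P5 x w a b w', or, if x = w', the 4-cycle w a b w'. The latter
   is impossible as well: a P5 through the cycle must leave it along some edge, and that edge
   continued around the cycle is a P5 containing both w and w'. Hence N(w) \<subseteq> {u, v} \<subseteq> V(C_e). *)

lemma graph_sym: "graph V E \<Longrightarrow> E x y \<Longrightarrow> E y x"
  unfolding graph_def by blast

lemma graph_irrefl: "graph V E \<Longrightarrow> \<not> E x x"
  unfolding graph_def by blast

lemma graph_edge_in_vertices: "graph V E \<Longrightarrow> E x y \<Longrightarrow> x \<in> V \<and> y \<in> V"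
  unfolding graph_def by blast

lemma is_P5_iff:
  "is_P5 V E p \<longleftrightarrow> length p = 5 \<and> distinct p \<and> set p \<subseteq> V \<and> successively E p"
proof -
  have "(\<forall>i<4. E (p ! i) (p ! Suc i)) \<longleftrightarrow> successively E p" if "length p = 5"
  proof -
    obtain a b c d e where "p = [a, b, c, d, e]"
      using \<open>length p = 5\<close> by (auto simp: numeral_eq_Suc length_Suc_conv)
    then show ?thesis by (auto simp: numeral_eq_Suc less_Suc_eq)
  qed
  then show ?thesis unfolding is_P5_def by blast
qed

lemma is_P5I:
  assumes "graph V E" "distinct [a, b, c, d, e]" "E a b" "E b c" "E c d" "E d e"
  shows "is_P5 V E [a, b, c, d, e]"
  using assms graph_edge_in_vertices[OF \<open>graph V E\<close>] by (auto simp: is_P5_iff)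

lemma successively_crosses_set:
  assumes "successively E p" "x \<in> set p" "x \<in> S" "y \<in> set p" "y \<notin> S"
  shows "\<exists>a b. (E a b \<or> E b a) \<and> a \<notin> S \<and> b \<in> S"
  using assms
proof (induction E p arbitrary: x y rule: successively.induct)
  case (3 E z z' zs)
  then show ?case by (cases "z' \<in> S") auto
qed auto

lemma P5_at_most_one_vertex_outside:
  assumes four: "\<forall>p. is_P5 V E p \<longrightarrow> card (set p \<inter> V2) \<ge> 4"
    and p: "is_P5 V E p" and "a \<in> set p" "b \<in> set p" "a \<notin> V2" "b \<notin> V2"
  shows "a = b"
proof (rule ccontr)
  assume "a \<noteq> b"
  have "card (set p) = 5" using p distinct_card unfolding is_P5_def by metis
  with assms(3,4) \<open>a \<noteq> b\<close> have "card (set p - {a, b}) = 3"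
    by (simp add: card_Diff_subset)
  moreover have "set p \<inter> V2 \<subseteq> set p - {a, b}" using assms(5,6) by auto
  ultimately have "card (set p \<inter> V2) \<le> 3" by (metis card_mono finite_Diff finite_set)
  with four p show False by fastforce
qed

lemma no_C4_with_two_adjacent_vertices_outside:
  assumes G: "graph V E"
    and four: "\<forall>p. is_P5 V E p \<longrightarrow> card (set p \<inter> V2) \<ge> 4"
    and cover: "\<forall>x\<in>V. \<exists>p. is_P5 V E p \<and> x \<in> set p"
    and dist: "distinct [a, b, c, d]"
    and cycle: "E a b" "E b c" "E c d" "E d a"
    and outside: "a \<notin> V2" "b \<notin> V2"
  shows False
proof -
  let ?C = "{a, b, c, d}"
  have sym: "\<And>x y. E x y \<Longrightarrow> E y x" using graph_sym[OF G] .
  obtain p where p: "is_P5 V E p" "a \<in> set p"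
    using cover graph_edge_in_vertices[OF G cycle(1)] by blast
  have "\<not> set p \<subseteq> ?C"
  proof
    assume "set p \<subseteq> ?C"
    then have "card (set p) \<le> card ?C" by (simp add: card_mono)
    also have "\<dots> \<le> 4" by (simp add: card_insert_le_m1)
    finally show False using p(1) distinct_card unfolding is_P5_def by fastforce
  qed
  then obtain q where "q \<in> set p" "q \<notin> ?C" by blast
  then obtain y z where yz: "E y z" "y \<notin> ?C" "z \<in> ?C"
    using successively_crosses_set[of E p a ?C q] p sym unfolding is_P5_iff by auto
  have "\<exists>P. is_P5 V E P \<and> a \<in> set P \<and> b \<in> set P"
    using yz(3)
  proof (elim insertE emptyE)
    assume "z = a"
    then show ?thesis using is_P5I[OF G, of y a b c d] dist yz cycle by auto
  next
    assume "z = b"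
    then show ?thesis using is_P5I[OF G, of y b a d c] dist yz cycle sym by auto
  next
    assume "z = c"
    then show ?thesis using is_P5I[OF G, of y c b a d] dist yz cycle sym by auto
  next
    assume "z = d"
    then show ?thesis using is_P5I[OF G, of y d a b c] dist yz cycle sym by auto
  qed
  then show False using P5_at_most_one_vertex_outside[OF four] outside dist by fastforce
qed

lemma bridged_vertex_has_no_other_neighbour:
  assumes G: "graph V E"
    and four: "\<forall>p. is_P5 V E p \<longrightarrow> card (set p \<inter> V2) \<ge> 4"
    and cover: "\<forall>x\<in>V. \<exists>p. is_P5 V E p \<and> x \<in> set p"
    and bridge: "E w a" "E a b" "E b w'"
    and ends: "w \<notin> V2" "w' \<notin> V2" "w \<noteq> w'"
    and inner: "a \<in> V2" "b \<in> V2"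
    and x: "E w x"
  shows "x = a \<or> x = b"
proof (rule ccontr)
  assume x_new: "\<not> (x = a \<or> x = b)"
  have "a \<noteq> b" "w \<noteq> x" using graph_irrefl[OF G] bridge x by metis+
  have "w \<noteq> a" "w \<noteq> b" "w' \<noteq> a" "w' \<noteq> b" using ends inner by auto
  show False
  proof (cases "x = w'")
    case True
    show False
      by (rule no_C4_with_two_adjacent_vertices_outside[OF G four cover, of w' w a b])
        (use True x x_new bridge ends graph_sym[OF G] \<open>a \<noteq> b\<close> \<open>w \<noteq> a\<close> \<open>w \<noteq> b\<close> in auto)
  next
    case False
    have "is_P5 V E [x, w, a, b, w']"
      using is_P5I[OF G] False x x_new bridge ends graph_sym[OF G] \<open>a \<noteq> b\<close> \<open>w \<noteq> x\<close>
        \<open>w \<noteq> a\<close> \<open>w \<noteq> b\<close> \<open>w' \<noteq> a\<close> \<open>w' \<noteq> b\<close>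
      by (simp add: eq_commute)
    from P5_at_most_one_vertex_outside[OF four this, of w w'] show False using ends by simp
  qed
qed

lemma card_ge_2_obtain_other:
  assumes "card A \<ge> 2"
  obtains y where "y \<in> A" "y \<noteq> x"
proof -
  have "\<not> A \<subseteq> {x}"
    using assms card_mono[of "{x}" A] by auto
  then show ?thesis using that by blast
qed

lemma attached_vertex_is_bridged:
  assumes G: "graph V E"
    and edge: "E u v"
    and two: "card {w \<in> V1. E w u \<or> E w v} \<ge> 2"
    and nv: "\<exists>w\<in>V1. E v w"
    and w: "w \<in> V1" "E w u"
  obtains a b w' where "{a, b} = {u, v}" "E w a" "E a b" "E b w'" "w' \<in> V1" "w' \<noteq> w"
proof -
  have sym: "\<And>x y. E x y \<Longrightarrow> E y x" using graph_sym[OF G] .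
  obtain w' where w': "w' \<in> V1" "E v w'" using nv by blast
  show ?thesis
  proof (cases "w' = w")
    case False
    then show ?thesis using that[of u v w'] w w' edge by auto
  next
    case True
    obtain w'' where w'': "w'' \<in> V1" "E w'' u \<or> E w'' v" "w'' \<noteq> w"
      using card_ge_2_obtain_other[OF two, of w] by blast
    then show ?thesis
      using that[of v u w''] that[of u v w''] True w w' edge sym by blast
  qed
qed

lemma neighbours_of_attached_vertex:
  assumes G: "graph V E"
    and part: "V1 \<inter> V2 = {}"
    and four: "\<forall>p. is_P5 V E p \<longrightarrow> card (set p \<inter> V2) \<ge> 4"
    and cover: "\<forall>x\<in>V. \<exists>p. is_P5 V E p \<and> x \<in> set p"
    and edge: "u \<in> V2" "v \<in> V2" "E u v"
    and two: "card {w \<in> V1. E w u \<or> E w v} \<ge> 2"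
    and nv: "\<exists>w\<in>V1. E v w"
    and w: "w \<in> V1" "E w u"
    and x: "E w x"
  shows "x = u \<or> x = v"
proof -
  obtain a b w' where ab: "{a, b} = {u, v}" and bridge: "E w a" "E a b" "E b w'"
    and w': "w' \<in> V1" "w' \<noteq> w"
    using attached_vertex_is_bridged[OF G edge(3) two nv w] .
  have "a \<in> V2" "b \<in> V2" using ab edge by (auto simp: doubleton_eq_iff)
  then have "x = a \<or> x = b"
    using bridged_vertex_has_no_other_neighbour[OF G four cover bridge _ _ _ _ _ x] part w w'
    by blast
  then show ?thesis using ab by (auto simp: doubleton_eq_iff)
qed

theorem lemma6:
  fixes V V1 V2 :: "'a set" and E :: "'a \<Rightarrow> 'a \<Rightarrow> bool" and k :: int and u v :: 'a
  assumes G: "graph V E"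
    and part: "V1 \<union> V2 = V" "V1 \<inter> V2 = {}"
    and free1: "P5_free V1 (induced E V1)"
    and free2: "P5_free V2 (induced E V2)"
    and k: "k \<ge> 1"
    and hasP5: "\<exists>p. is_P5 V E p"
    and cover: "\<forall>x\<in>V. \<exists>p. is_P5 V E p \<and> x \<in> set p"
    and four: "\<forall>p. is_P5 V E p \<longrightarrow> card (set p \<inter> V2) \<ge> 4"
    and noiso: "\<not> (\<exists>x\<in>V2. (\<forall>y\<in>V2. \<not> E x y) \<and>
                    (\<exists>w y z t. is_P5 V E [x, w, y, z, t] \<and> w \<in> V1))"
    and edge: "u \<in> V2" "v \<in> V2" "E u v"
    and two: "card {w \<in> V1. E w u \<or> E w v} \<ge> 2"
    and nu: "\<exists>w\<in>V1. E u w" and nv: "\<exists>w\<in>V1. E v w"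
  shows "\<forall>w\<in>V1. (E w u \<or> E w v) \<longrightarrow>
           nbhd V E w \<subseteq> component V2 (induced E V2) u"
proof (intro ballI impI subsetI)
  fix w y assume w: "w \<in> V1" "E w u \<or> E w v" and "y \<in> nbhd V E w"
  then have "E w y" unfolding nbhd_def by simp
  have two': "card {w \<in> V1. E w v \<or> E w u} \<ge> 2" using two by (simp add: disj_commute)
  have "y = u \<or> y = v"
    using w neighbours_of_attached_vertex[OF G part(2) four cover edge two nv _ _ \<open>E w y\<close>]
      neighbours_of_attached_vertex[OF G part(2) four cover edge(2,1) graph_sym[OF G edge(3)]
        two' nu _ _ \<open>E w y\<close>]
    by blast
  moreover have "u \<in> component V2 (induced E V2) u" "v \<in> component V2 (induced E V2) u"
    using edge unfolding component_def induced_def by auto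
  ultimately show "y \<in> component V2 (induced E V2) u" by blast
qed

end
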